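(* For all integers $q\ge1$ and $n\ge1$, the number of nonattacking placements of $q$ unlabelled semibishops on the $n\times n$ triangular board is $$u^{\mathcal T}_{\mathsf Q^{01}}(q;n)=(-1)^q s(n+1,n+1-q).$$
   Context: The $n\times n$ triangular board is the set $\{(x,y)\in\mathbb Z^2:1\le x\le y-1\le n\}$ (the integral points in the interior of the $(n+2)$-fold dilation of the triangle $\{0\le x\le y\le1\}$). The semibishop has the single basic move $(1,1)$: two pieces at positions $z,z'$ attack each other if $z'-z$ is an integer multiple of $(1,1)$ (including $z=z'$). $u^{\mathcal T}_{\mathsf Q^{01}}(q;n)$ counts the sets of $q$ positions on the triangular board no two of which attack each other. $s(a,b)$ is the signed Stirling number of the first kind. *)

theory Defs
  imports Main "HOL-Combinatorics.Stirling"
begin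

definition tri_board :: "nat \<Rightarrow> (int \<times> int) set" where
  "tri_board n = {(x, y). 1 \<le> x \<and> x \<le> y - 1 \<and> y - 1 \<le> int n}"

definition semibishop_attacks :: "int \<times> int \<Rightarrow> int \<times> int \<Rightarrow> bool" where
  "semibishop_attacks z z' \<longleftrightarrow> (\<exists>k::int. fst z' - fst z = k \<and> snd z' - snd z = k)"

definition nonattacking :: "(int \<times> int) set \<Rightarrow> bool" where
  "nonattacking S \<longleftrightarrow> (\<forall>z\<in>S. \<forall>z'\<in>S. z \<noteq> z' \<longrightarrow> \<not> semibishop_attacks z z')"

definition u_T_Q01 :: "nat \<Rightarrow> nat \<Rightarrow> nat" where
  "u_T_Q01 q n = card {S. S \<subseteq> tri_board n \<and> card S = q \<and> nonattacking S}"

definition signed_stirling1 :: "int \<Rightarrow> int \<Rightarrow> int" where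
  "signed_stirling1 a b =
     (if a < 0 \<or> b < 0 then 0
      else (-1) ^ (nat a - nat b) * int (stirling (nat a) (nat b)))"

end

theory Submission
  imports Defs
begin

text \<open>Two semibishops attack each other exactly when they lie on the same diagonal
  \<open>y - x = d\<close>, so a nonattacking set picks at most one cell from each diagonal. The board
  of size \<open>n + 1\<close> is its longest diagonal (\<open>n + 1\<close> cells with \<open>y - x = 1\<close>) together with a
  copy of the board of size \<open>n\<close> shifted up by one. A nonattacking set of \<open>q + 1\<close> cells
  either avoids the longest diagonal or meets it in one of its \<open>n + 1\<close> cells, which gives
  \<open>u(q+1; n+1) = u(q+1; n) + (n+1) u(q; n)\<close>: the recurrence of the unsigned Stirling
  numbers \<open>c(n+2, n+1-q)\<close>.\<close>

definition diagonal :: "int \<times> int \<Rightarrow> int" where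
  "diagonal z = snd z - fst z"

definition inj_subsets :: "('a \<Rightarrow> 'b) \<Rightarrow> 'a set \<Rightarrow> nat \<Rightarrow> 'a set set" where
  "inj_subsets f X k = {S. S \<subseteq> X \<and> card S = k \<and> inj_on f S}"

lemma finite_inj_subsets: "finite X \<Longrightarrow> finite (inj_subsets f X k)"
  unfolding inj_subsets_def by (rule finite_subset[of _ "Pow X"]) auto

lemma inj_subsets_empty: "inj_subsets f {} k = (if k = 0 then {{}} else {})"
  unfolding inj_subsets_def by auto

lemma inj_subsets_0: "finite X \<Longrightarrow> inj_subsets f X 0 = {{}}"
  unfolding inj_subsets_def by (auto dest: finite_subset)

lemma card_inj_subsets_image:
  assumes "inj_on h X"
  shows "card (inj_subsets f (h ` X) k) = card (inj_subsets (f \<circ> h) X k)"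
proof -
  have image_props: "card (h ` S) = card S" "inj_on f (h ` S) \<longleftrightarrow> inj_on (f \<circ> h) S"
    if "S \<subseteq> X" for S
    using inj_on_subset[OF assms that] by (simp_all add: card_image comp_inj_on_iff)
  have "inj_subsets f (h ` X) k = image h ` inj_subsets (f \<circ> h) X k"
  proof (rule set_eqI)
    fix T
    have "T \<in> inj_subsets f (h ` X) k \<longleftrightarrow>
          (\<exists>S\<subseteq>X. T = h ` S \<and> card (h ` S) = k \<and> inj_on f (h ` S))"
      unfolding inj_subsets_def by (auto simp: subset_image_iff)
    also have "\<dots> \<longleftrightarrow> (\<exists>S\<subseteq>X. T = h ` S \<and> card S = k \<and> inj_on (f \<circ> h) S)"
      using image_props by (metis (no_types, lifting))
    also have "\<dots> \<longleftrightarrow> T \<in> image h ` inj_subsets (f \<circ> h) X k"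
      unfolding inj_subsets_def by blast
    finally show "T \<in> inj_subsets f (h ` X) k \<longleftrightarrow> T \<in> image h ` inj_subsets (f \<circ> h) X k" .
  qed
  moreover have "inj_on (image h) (inj_subsets (f \<circ> h) X k)"
    using assms unfolding inj_subsets_def by (intro inj_on_image) (auto intro: inj_on_subset)
  ultimately show ?thesis by (simp add: card_image)
qed

text \<open>A set with distinct \<open>f\<close>-values meets the fibre \<open>D\<close> of \<open>c\<close> in at most one point.\<close>
lemma inj_subsets_meeting_fibre:
  assumes "D \<inter> X = {}" "\<And>z. z \<in> D \<Longrightarrow> f z = c" "c \<notin> f ` X" "finite X"
  shows "{S \<in> inj_subsets f (D \<union> X) (Suc k). S \<inter> D \<noteq> {}} =
         (\<lambda>(p, T). insert p T) ` (D \<times> inj_subsets f X k)"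
proof (rule set_eqI, rule iffI)
  fix S assume S: "S \<in> {S \<in> inj_subsets f (D \<union> X) (Suc k). S \<inter> D \<noteq> {}}"
  then obtain p where p: "p \<in> S" "p \<in> D" by auto
  have S_sub: "S \<subseteq> D \<union> X" and S_card: "card S = Suc k" and S_inj: "inj_on f S"
    using S by (auto simp: inj_subsets_def)
  have "S - {p} \<subseteq> X"
  proof
    fix z assume z: "z \<in> S - {p}"
    show "z \<in> X"
    proof (rule ccontr)
      assume "z \<notin> X"
      then have "f z = f p" using z S_sub p assms(2) by auto
      then show False using z p S_inj by (auto dest: inj_onD)
    qed
  qed
  with S_card S_inj p have "(p, S - {p}) \<in> D \<times> inj_subsets f X k"
    by (auto simp: inj_subsets_def intro: inj_on_subset)
  moreover have "S = insert p (S - {p})" using p by auto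
  ultimately show "S \<in> (\<lambda>(p, T). insert p T) ` (D \<times> inj_subsets f X k)"
    by (metis (no_types, lifting) image_eqI case_prod_conv)
next
  fix S assume "S \<in> (\<lambda>(p, T). insert p T) ` (D \<times> inj_subsets f X k)"
  then obtain p T where p: "p \<in> D" and T: "T \<subseteq> X" "card T = k" "inj_on f T"
    and S: "S = insert p T" by (auto simp: inj_subsets_def)
  have "p \<notin> T" "f p \<notin> f ` T" using p T(1) assms(1-3) by auto
  moreover have "finite T" using T(1) assms(4) by (rule finite_subset)
  ultimately show "S \<in> {S \<in> inj_subsets f (D \<union> X) (Suc k). S \<inter> D \<noteq> {}}"
    using p T S by (auto simp: inj_subsets_def)
qed

lemma card_inj_subsets_add_fibre:
  assumes "D \<inter> X = {}" "\<And>z. z \<in> D \<Longrightarrow> f z = c" "c \<notin> f ` X" "finite D" "finite X"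
  shows "card (inj_subsets f (D \<union> X) (Suc k)) =
         card (inj_subsets f X (Suc k)) + card D * card (inj_subsets f X k)"
proof -
  let ?P = "inj_subsets f (D \<union> X) (Suc k)"
  let ?meeting = "{S \<in> ?P. S \<inter> D \<noteq> {}}"
  have avoiding: "{S \<in> ?P. S \<inter> D = {}} = inj_subsets f X (Suc k)"
    using assms(1) unfolding inj_subsets_def by blast
  have "p = p' \<and> T = T'"
    if "p \<in> D" "p' \<in> D" "T \<subseteq> X" "T' \<subseteq> X" "insert p T = insert p' T'" for p p' T T'
  proof -
    have fresh: "p \<notin> T" "p \<notin> T'" "p' \<notin> T'" using that(1-4) assms(1) by auto
    with that(5) have "p = p'" by blast
    with that(5) fresh show ?thesis by (simp add: insert_ident)
  qed
  then have "inj_on (\<lambda>(p, T). insert p T) (D \<times> inj_subsets f X k)"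
    by (auto simp: inj_on_def inj_subsets_def)
  then have meeting: "card ?meeting = card D * card (inj_subsets f X k)"
    using inj_subsets_meeting_fibre[OF assms(1-3,5)]
    by (simp add: card_image card_cartesian_product)
  have "finite ?P" using assms(4,5) by (simp add: finite_inj_subsets)
  have "?P = {S \<in> ?P. S \<inter> D = {}} \<union> ?meeting" by blast
  then have "card ?P = card ({S \<in> ?P. S \<inter> D = {}} \<union> ?meeting)" by simp
  also have "\<dots> = card {S \<in> ?P. S \<inter> D = {}} + card ?meeting"
    using \<open>finite ?P\<close> by (intro card_Un_disjoint) auto
  finally show ?thesis using avoiding meeting by simp
qed

lemma nonattacking_iff_inj_on_diagonal: "nonattacking S \<longleftrightarrow> inj_on diagonal S"
proof -
  have "semibishop_attacks z z' \<longleftrightarrow> diagonal z = diagonal z'" for z z'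
    unfolding semibishop_attacks_def diagonal_def by auto
  then show ?thesis unfolding nonattacking_def inj_on_def by blast
qed

lemma tri_board_0: "tri_board 0 = {}"
  unfolding tri_board_def by auto

lemma finite_tri_board: "finite (tri_board n)"
  by (rule finite_subset[of _ "{1..int n + 1} \<times> {1..int n + 1}"]) (auto simp: tri_board_def)

definition shift_up :: "int \<times> int \<Rightarrow> int \<times> int" where
  "shift_up z = (fst z, snd z + 1)"

lemma inj_shift_up: "inj shift_up"
  by (auto simp: inj_def shift_up_def)

definition main_diagonal :: "nat \<Rightarrow> (int \<times> int) set" where
  "main_diagonal n = (\<lambda>x. (x, x + 1)) ` {1..int n}"

lemma tri_board_Suc: "tri_board (Suc n) = main_diagonal (Suc n) \<union> shift_up ` tri_board n"
proof (rule set_eqI)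
  fix z :: "int \<times> int"
  obtain x y where z: "z = (x, y)" by fastforce
  show "z \<in> tri_board (Suc n) \<longleftrightarrow> z \<in> main_diagonal (Suc n) \<union> shift_up ` tri_board n"
  proof (cases "y = x + 1")
    case True
    then show ?thesis by (auto simp: z tri_board_def main_diagonal_def shift_up_def)
  next
    case False
    have "z = shift_up (x, y - 1)" using z by (simp add: shift_up_def)
    then have "z \<in> shift_up ` tri_board n \<longleftrightarrow> (x, y - 1) \<in> tri_board n"
      by (simp add: inj_image_mem_iff[OF inj_shift_up])
    moreover have "z \<in> tri_board (Suc n) \<longleftrightarrow> (x, y - 1) \<in> tri_board n"
      using False z by (auto simp: tri_board_def)
    moreover have "z \<notin> main_diagonal (Suc n)"
      using False z by (auto simp: main_diagonal_def)
    ultimately show ?thesis by blast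
  qed
qed

lemma finite_main_diagonal: "finite (main_diagonal n)"
  by (simp add: main_diagonal_def)

lemma card_main_diagonal: "card (main_diagonal n) = n"
  unfolding main_diagonal_def by (subst card_image) (auto simp: inj_on_def)

lemma stirling_Suc_Suc_diff_Suc:
  "stirling (Suc (Suc n)) (Suc (Suc n) - Suc k) =
   stirling (Suc n) (Suc n - Suc k) + Suc n * stirling (Suc n) (Suc n - k)"
proof (cases "k \<le> n")
  case True
  then have "Suc (Suc n) - Suc k = Suc (n - k)" "Suc n - Suc k = n - k" "Suc n - k = Suc (n - k)"
    by auto
  then show ?thesis by simp
next
  case False
  then show ?thesis by simp
qed

lemma card_inj_subsets_diagonal_tri_board:
  "card (inj_subsets diagonal (tri_board n) q) = stirling (Suc n) (Suc n - q)"
proof (induction n arbitrary: q)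
  case 0
  show ?case by (simp add: tri_board_0 inj_subsets_empty)
next
  case (Suc n)
  show ?case
  proof (cases q)
    case 0
    then show ?thesis by (simp add: inj_subsets_0 finite_tri_board)
  next
    case (Suc k)
    have "card (inj_subsets diagonal (shift_up ` tri_board n) j) =
          card (inj_subsets diagonal (tri_board n) j)" for j
    proof -
      have "card (inj_subsets diagonal (shift_up ` tri_board n) j) =
            card (inj_subsets (diagonal \<circ> shift_up) (tri_board n) j)"
        by (rule card_inj_subsets_image) (rule inj_on_subset[OF inj_shift_up subset_UNIV])
      also have "inj_subsets (diagonal \<circ> shift_up) (tri_board n) j =
                 inj_subsets diagonal (tri_board n) j"
        by (simp add: inj_subsets_def inj_on_def diagonal_def shift_up_def)
      finally show ?thesis .
    qed
    moreover have "diagonal z = 1" if "z \<in> main_diagonal (Suc n)" for z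
      using that by (auto simp: main_diagonal_def diagonal_def)
    moreover have "1 \<notin> diagonal ` shift_up ` tri_board n"
      by (auto simp: tri_board_def diagonal_def shift_up_def)
    moreover have "main_diagonal (Suc n) \<inter> shift_up ` tri_board n = {}"
      by (auto simp: main_diagonal_def tri_board_def shift_up_def)
    ultimately have "card (inj_subsets diagonal (tri_board (Suc n)) (Suc k)) =
        card (inj_subsets diagonal (tri_board n) (Suc k))
        + Suc n * card (inj_subsets diagonal (tri_board n) k)"
      unfolding tri_board_Suc
      by (subst card_inj_subsets_add_fibre[where c = 1])
         (simp_all add: card_main_diagonal finite_tri_board finite_main_diagonal)
    also have "\<dots> = stirling (Suc (Suc n)) (Suc (Suc n) - Suc k)"
      by (simp only: Suc.IH stirling_Suc_Suc_diff_Suc)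
    finally show ?thesis using Suc by simp
  qed
qed

lemma u_T_Q01_eq_stirling: "u_T_Q01 q n = stirling (Suc n) (Suc n - q)"
  using card_inj_subsets_diagonal_tri_board
  by (simp add: u_T_Q01_def inj_subsets_def nonattacking_iff_inj_on_diagonal)

theorem proposition7p4:
  fixes q n :: nat
  assumes "q \<ge> 1" and "n \<ge> 1"
  shows "int (u_T_Q01 q n) = (-1) ^ q * signed_stirling1 (int n + 1) (int n + 1 - int q)"
proof (cases "q \<le> Suc n")
  case True
  have "nat (int n + 1) = Suc n" "nat (int n + 1 - int q) = Suc n - q" "Suc n - (Suc n - q) = q"
    using True by auto
  then have "signed_stirling1 (int n + 1) (int n + 1 - int q) = (-1) ^ q * int (u_T_Q01 q n)"
    using True by (simp add: u_T_Q01_eq_stirling signed_stirling1_def)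
  moreover have "(-1::int) ^ q * (-1) ^ q = 1"
    by (simp flip: power_mult_distrib)
  ultimately show ?thesis
    by (simp add: mult.assoc[symmetric])
next
  case False
  then show ?thesis by (simp add: u_T_Q01_eq_stirling signed_stirling1_def)
qed

end
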